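(* Let $d\ge3$, $m\in(0,1)$, $0<D_1\le D_*\le D_0$, and let $w\in C^1(\mathbb R^d)$ satisfy $V_{D_0}\le wV_{D_*}\le V_{D_1}$, $w-1=f/V_{D_*}$ for some $f\in L^1(\mathbb R^d)$, and $W_0\le w\le W_1$ on $\mathbb R^d$ for constants $0<W_0\le1\le W_1$. Let $g=(w-1)V_{D_*}^{m-1}$. Then $$\mathsf I[g]\le\beta_1\,\mathcal J[w]+\beta_2\,\mathsf F[g],\qquad \beta_1=\frac{W_1^{2(2-m)}}{W_0},\quad \beta_2=2d(1-m)\Big(\big(W_1/W_0\big)^{2(2-m)}-1\Big).$$ In particular, with $\eta=\max\{1-W_0,W_1-1\}$, $|1-\beta_1|+\beta_2\to0$ as $\eta\to0^+$.
   Context: $V_D(x)=\big(D+\frac{1-m}{2m}|x|^2\big)^{-1/(1-m)}$. $\mathcal J[w]=\frac{m}{(m-1)^2}\int_{\mathbb R^d}\big|\nabla[(w^{m-1}-1)V_{D_*}^{m-1}]\big|^2wV_{D_*}\,dx$. Linearized functionals: $\mathsf F[g]=\frac12\int_{\mathbb R^d}|g|^2V_{D_*}^{2-m}dx$ and $\mathsf I[g]=m\int_{\mathbb R^d}|\nabla g|^2V_{D_*}dx$. *)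

theory Defs
  imports "HOL-Analysis.Analysis"
begin

definition VD :: "real \<Rightarrow> real \<Rightarrow> real^'n \<Rightarrow> real" where
  "VD m D x = (D + (1 - m) / (2 * m) * (norm x)\<^sup>2) powr (- 1 / (1 - m))"

definition grad :: "(real^'n \<Rightarrow> real) \<Rightarrow> real^'n \<Rightarrow> real^'n" where
  "grad u x = (\<chi> i. frechet_derivative u (at x) (axis i 1))"

definition C1 :: "(real^'n \<Rightarrow> real) \<Rightarrow> bool" where
  "C1 u \<longleftrightarrow> (\<forall>x. u differentiable (at x)) \<and> continuous_on UNIV (grad u)"

definition Jfun :: "real \<Rightarrow> real \<Rightarrow> (real^'n \<Rightarrow> real) \<Rightarrow> ennreal" where
  "Jfun m Ds w = (\<integral>\<^sup>+ x. ennreal (m / (m - 1)\<^sup>2 *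
      (norm (grad (\<lambda>y. (w y powr (m - 1) - 1) * VD m Ds y powr (m - 1)) x))\<^sup>2
      * w x * VD m Ds x) \<partial>lborel)"

definition Ffun :: "real \<Rightarrow> real \<Rightarrow> (real^'n \<Rightarrow> real) \<Rightarrow> ennreal" where
  "Ffun m Ds g = (\<integral>\<^sup>+ x. ennreal (1/2 * (g x)\<^sup>2 * VD m Ds x powr (2 - m)) \<partial>lborel)"

definition Ifun :: "real \<Rightarrow> real \<Rightarrow> (real^'n \<Rightarrow> real) \<Rightarrow> ennreal" where
  "Ifun m Ds g = (\<integral>\<^sup>+ x. ennreal (m * (norm (grad g x))\<^sup>2 * VD m Ds x) \<partial>lborel)"

definition beta1 :: "real \<Rightarrow> real \<Rightarrow> real \<Rightarrow> real" where
  "beta1 m W0 W1 = W1 powr (2 * (2 - m)) / W0"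

definition beta2 :: "nat \<Rightarrow> real \<Rightarrow> real \<Rightarrow> real \<Rightarrow> real" where
  "beta2 d m W0 W1 = 2 * real d * (1 - m) * ((W1 / W0) powr (2 * (2 - m)) - 1)"

end

theory Submission
  imports Defs
begin

text \<open>
  Write P = D + (1-m)/(2m) |x|^2 for the Barenblatt pressure, so that
  V^(m-1) = P and V^(2-m) = V / P.  Then g = (w-1) P, and the integrands of I, J and F become
  m |(w-1) \<nabla>P + P \<nabla>w|^2 V,  m/(m-1)^2 |(w^(m-1)-1) \<nabla>P + P (m-1) w^(m-2) \<nabla>w|^2 w V
  and 1/2 (w-1)^2 P V.  The vector in I equals c times the vector in J plus R \<nabla>P, where
  c = w^(2-m)/(m-1) is the inverse chain-rule factor and R = (w-1) - w (w^(1-m)-1)/(1-m) is a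
  Taylor remainder with |R| \<le> (w-1)^2.  The weighted triangle inequality
  |X+Y|^2 \<le> t |X|^2 + t/(t-1) |Y|^2 with t = W1/W0, together with |\<nabla>P|^2 \<le> 2(1-m)/m P,
  gives the inequality pointwise; integrating it gives the theorem.  The limit statement is
  continuity of the constants at W0 = W1 = 1.
\<close>

text \<open>Concavity of z \<mapsto> z^a for 0 < a < 1: the graph lies below its tangent at z = 1.\<close>
lemma powr_le_tangent:
  fixes z a :: real assumes "0 < z" "0 < a" "a < 1"
  shows "z powr a \<le> 1 + a * (z - 1)"
  using Youngs_inequality_0[of a "1 - a" z 1] assms by (simp add: algebra_simps)

text \<open>Second-order Taylor bound for the map w \<mapsto> w (w^a - 1)/a at w = 1, obtained from the
  tangent bound at w and at 1/w.  With a = 1 - m this controls the remainder R of the strategy.\<close>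
lemma powr_taylor_remainder:
  fixes w a :: real assumes w: "0 < w" and a: "0 < a" "a < 1"
  shows "\<bar>(w - 1) - w * (w powr a - 1) / a\<bar> \<le> (w - 1)\<^sup>2"
proof -
  define s where "s = w powr a"
  have s0: "0 < s" using w by (simp add: s_def)
  have "s - 1 \<le> a * (w - 1)" using powr_le_tangent[OF w a] by (simp add: s_def)
  hence "w * (s - 1) \<le> w * (a * (w - 1))" using w by (simp add: mult_left_mono)
  hence upper: "w * (s - 1) / a \<le> (w - 1) * w" using a by (simp add: field_simps)
  have "(1/w) powr a \<le> 1 + a * (1/w - 1)" using powr_le_tangent[of "1/w" a] w a by simp
  moreover have "(1/w) powr a = 1 / s" using w by (simp add: s_def powr_divide)
  ultimately have "w \<le> s * (w + a * (1 - w))" using s0 w by (simp add: field_simps)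
  hence lower: "(w - 1) * s \<le> w * (s - 1) / a" using a by (simp add: field_simps)
  have between: "(w - 1) * 1 \<le> (w - 1) * s \<and> (w - 1) * s \<le> (w - 1) * w"
  proof (cases "1 \<le> w")
    case True
    hence "1 \<le> s" "s \<le> w" using a powr_mono[of a 1 w] by (auto simp: s_def ge_one_powr_ge_zero)
    thus ?thesis using True mult_left_mono[of 1 s "w - 1"] mult_left_mono[of s w "w - 1"] by simp
  next
    case False
    hence "w \<le> s" "s \<le> 1" using a w powr_mono'[of a 1 w] by (auto simp: s_def powr_le1)
    thus ?thesis using False mult_left_mono_neg[of s 1 "w - 1"] mult_left_mono_neg[of w s "w - 1"] by simp
  qed
  have "(w - 1) * (w - 1) = (w - 1)\<^sup>2" by (simp add: power2_eq_square)
  thus ?thesis using upper lower between unfolding s_def[symmetric]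
    by (simp add: abs_le_iff algebra_simps)
qed

lemma norm_sum_sq_le_weighted:
  fixes X Y :: "'v::real_normed_vector" and t :: real assumes t: "1 < t"
  shows "(norm (X + Y))\<^sup>2 \<le> t * (norm X)\<^sup>2 + t / (t - 1) * (norm Y)\<^sup>2"
proof -
  define p q where "p = norm X" and "q = norm Y"
  have "t * p\<^sup>2 + t / (t - 1) * q\<^sup>2 - (p + q)\<^sup>2 = ((t - 1) * p - q)\<^sup>2 / (t - 1)"
    using t by (simp add: field_simps power2_eq_square)
  moreover have "0 \<le> ((t - 1) * p - q)\<^sup>2 / (t - 1)" using t by simp
  moreover have "(norm (X + Y))\<^sup>2 \<le> (p + q)\<^sup>2"
    unfolding p_def q_def by (simp add: norm_triangle_ineq power_mono)
  ultimately show ?thesis unfolding p_def q_def by linarith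
qed

lemma beta1_bound:
  fixes m w W0 W1 :: real
  assumes m: "m < 1" and W0: "0 < W0" and w: "0 < w" "w \<le> W1"
  shows "W1 / W0 * w powr (3 - 2 * m) \<le> beta1 m W0 W1"
proof -
  have "W1 powr (2 * (2 - m)) = W1 * W1 powr (3 - 2 * m)"
    using w powr_add[of W1 1 "3 - 2 * m"] by (simp add: algebra_simps)
  moreover have "w powr (3 - 2 * m) \<le> W1 powr (3 - 2 * m)"
    using w m by (intro powr_mono2) auto
  hence "W1 * w powr (3 - 2 * m) / W0 \<le> W1 * W1 powr (3 - 2 * m) / W0"
    using w W0 by (intro divide_right_mono mult_left_mono) auto
  ultimately show ?thesis by (simp add: beta1_def)
qed

lemma beta2_bound:
  fixes m W0 W1 :: real and d :: nat
  assumes m: "m < 1" and d: "3 \<le> d" and W: "0 < W0" "W0 \<le> 1" "W0 \<le> W1"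
  shows "2 * W1 * (W1 - W0) \<le> real d * ((W1 / W0) powr (2 * (2 - m)) - 1)"
proof -
  define t where "t = W1 / W0"
  have t1: "1 \<le> t" using W by (simp add: t_def)
  have "2 * W1 * (W1 - W0) = 2 * W0\<^sup>2 * (t * (t - 1))"
    using W by (simp add: t_def field_simps power2_eq_square)
  also have "\<dots> \<le> 2 * (t * (t - 1))"
    using W t1 by (simp add: power_le_one mult_right_mono)
  also have "\<dots> \<le> 3 * (t\<^sup>2 - 1)"
    using t1 mult_mono[OF t1 t1] by (simp add: power2_eq_square algebra_simps)
  also have "\<dots> \<le> real d * (t\<^sup>2 - 1)"
    using d t1 by (intro mult_right_mono) (auto simp: one_le_power)
  also have "\<dots> \<le> real d * (t powr (2 * (2 - m)) - 1)"
    using t1 m powr_mono[of 2 "2 * (2 - m)" t] by (intro mult_left_mono) (auto simp: powr_realpow)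
  finally show ?thesis by (simp add: t_def)
qed

lemma beta2_nonneg:
  fixes m W0 W1 :: real and d :: nat
  assumes m: "m < 1" and d: "3 \<le> d" and W: "0 < W0" "W0 \<le> 1" "1 \<le> W1"
  shows "0 \<le> beta2 d m W0 W1"
proof -
  have "0 \<le> 2 * W1 * (W1 - W0)" using W by simp
  also have "\<dots> \<le> real d * ((W1 / W0) powr (2 * (2 - m)) - 1)"
    using beta2_bound[OF m d] W by simp
  finally have "0 \<le> 2 * (1 - m) * (real d * ((W1 / W0) powr (2 * (2 - m)) - 1))"
    using m by simp
  thus ?thesis by (simp add: beta2_def mult_ac)
qed

lemma gradient_decomposition:
  fixes a b :: "'v::real_vector" and w m h :: real
  assumes w: "0 < w" and m: "m \<noteq> 1"
  shows "(w - 1) *\<^sub>R b + h *\<^sub>R a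
    = (w powr (2 - m) / (m - 1)) *\<^sub>R ((w powr (m - 1) - 1) *\<^sub>R b + h *\<^sub>R (((m - 1) * w powr (m - 2)) *\<^sub>R a))
      + ((w - 1) - w * (w powr (1 - m) - 1) / (1 - m)) *\<^sub>R b"
proof -
  have e1: "w powr (2 - m) * w powr (m - 2) = 1" using w by (simp add: powr_add[symmetric])
  have e2: "w powr (2 - m) * w powr (m - 1) = w" using w by (simp add: powr_add[symmetric])
  have e3: "w * w powr (1 - m) = w powr (2 - m)"
    using w powr_add[of w 1 "1 - m"] by (simp add: algebra_simps)
  have coeff_a: "w powr (2 - m) / (m - 1) * (h * ((m - 1) * w powr (m - 2))) = h"
    using m e1 by (simp add: field_simps)
  have coeff_b: "w powr (2 - m) / (m - 1) * (w powr (m - 1) - 1) + ((w - 1) - w * (w powr (1 - m) - 1) / (1 - m)) = w - 1"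
  proof -
    have "w powr (2 - m) * (w powr (m - 1) - 1) = w - w powr (2 - m)"
      using e2 by (simp add: algebra_simps)
    moreover have "w * (w powr (1 - m) - 1) = w powr (2 - m) - w"
      using e3 by (simp add: algebra_simps)
    moreover have "(w - w powr (2 - m)) / (m - 1) - (w powr (2 - m) - w) / (1 - m) = 0"
      using m by (simp add: field_simps)
    ultimately show ?thesis by (simp add: diff_divide_distrib)
  qed
  have "(w powr (2 - m) / (m - 1)) *\<^sub>R ((w powr (m - 1) - 1) *\<^sub>R b + h *\<^sub>R (((m - 1) * w powr (m - 2)) *\<^sub>R a))
      + ((w - 1) - w * (w powr (1 - m) - 1) / (1 - m)) *\<^sub>R b
    = (w powr (2 - m) / (m - 1) * (w powr (m - 1) - 1) + ((w - 1) - w * (w powr (1 - m) - 1) / (1 - m))) *\<^sub>R b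
      + (w powr (2 - m) / (m - 1) * (h * ((m - 1) * w powr (m - 2)))) *\<^sub>R a"
    by (simp add: scaleR_add_right scaleR_add_left)
  then show ?thesis unfolding coeff_a coeff_b by simp
qed

lemma principal_term_bound:
  fixes m w W0 W1 N V :: real
  assumes m: "0 \<le> m" "m < 1" and W0: "0 < W0" and w: "0 < w" "w \<le> W1"
    and N: "0 \<le> N" and V: "0 \<le> V"
  shows "m * V * (W1 / W0 * (w powr (2 - m) / (m - 1))\<^sup>2 * N)
    \<le> beta1 m W0 W1 * (m / (m - 1)\<^sup>2 * N * w * V)"
proof -
  have "(w powr (2 - m) / (m - 1))\<^sup>2 = w * w powr (3 - 2 * m) / (m - 1)\<^sup>2"
    using w powr_add[of w 1 "3 - 2 * m"]
    by (simp add: power_divide power2_eq_square powr_add[symmetric] algebra_simps)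
  hence "W1 / W0 * (w powr (2 - m) / (m - 1))\<^sup>2 = w * (W1 / W0 * w powr (3 - 2 * m)) / (m - 1)\<^sup>2"
    by simp
  also have "\<dots> \<le> w * beta1 m W0 W1 / (m - 1)\<^sup>2"
    using beta1_bound[OF m(2) W0 w] w by (intro divide_right_mono mult_left_mono) auto
  finally have coeff: "W1 / W0 * (w powr (2 - m) / (m - 1))\<^sup>2 \<le> w * beta1 m W0 W1 / (m - 1)\<^sup>2" .
  have "m * V * (W1 / W0 * (w powr (2 - m) / (m - 1))\<^sup>2 * N)
      = (W1 / W0 * (w powr (2 - m) / (m - 1))\<^sup>2) * (m * V * N)" by (simp add: mult_ac)
  also have "\<dots> \<le> (w * beta1 m W0 W1 / (m - 1)\<^sup>2) * (m * V * N)"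
    using coeff m V N by (intro mult_right_mono) auto
  also have "\<dots> = beta1 m W0 W1 * (m / (m - 1)\<^sup>2 * N * w * V)" by (simp add: mult_ac)
  finally show ?thesis .
qed

lemma remainder_term_bound:
  fixes m w h V W0 W1 R B :: real and d :: nat
  assumes m: "0 < m" "m < 1" and W: "0 < W0" "W0 \<le> 1" "1 \<le> W1" "W0 < W1"
    and w: "W0 \<le> w" "w \<le> W1" and R: "\<bar>R\<bar> \<le> (w - 1)\<^sup>2"
    and B: "0 \<le> B" "B \<le> 2 * (1 - m) / m * h" and h: "0 \<le> h" and V: "0 \<le> V" and d: "3 \<le> d"
  shows "m * V * ((W1 / W0) / (W1 / W0 - 1) * R\<^sup>2 * B) \<le> beta2 d m W0 W1 * (1/2 * (w - 1)\<^sup>2 * h * V)"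
proof -
  define t where "t = W1 / W0"
  have t: "1 < t" using W by (simp add: t_def)
  have "(w - 1)\<^sup>2 \<le> (W1 - W0)\<^sup>2"
    using W w power_mono[of "\<bar>w - 1\<bar>" "W1 - W0" 2] by (simp add: abs_le_iff)
  with R have "R\<^sup>2 \<le> (W1 - W0)\<^sup>2 * (w - 1)\<^sup>2"
    by (metis abs_ge_zero power2_abs power2_eq_square mult_mono zero_le_power2 order_trans)
  hence "t / (t - 1) * R\<^sup>2 * B \<le> t / (t - 1) * ((W1 - W0)\<^sup>2 * (w - 1)\<^sup>2) * (2 * (1 - m) / m * h)"
    using t B by (intro mult_mono mult_left_mono) auto
  also have "\<dots> = (t / (t - 1) * (W1 - W0)\<^sup>2) * (w - 1)\<^sup>2 * (2 * (1 - m) / m * h)"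
    by (simp only: mult_ac)
  also have "t / (t - 1) * (W1 - W0)\<^sup>2 = W1 * (W1 - W0)"
    using W by (simp add: t_def field_simps power2_eq_square)
  finally have "m * V * (t / (t - 1) * R\<^sup>2 * B)
      \<le> m * V * (W1 * (W1 - W0) * (w - 1)\<^sup>2 * (2 * (1 - m) / m * h))"
    using m V by (intro mult_left_mono) auto
  also have "\<dots> = 2 * W1 * (W1 - W0) * ((1 - m) * (w - 1)\<^sup>2 * h * V)"
    using m by (simp add: field_simps)
  also have "\<dots> \<le> (real d * ((W1 / W0) powr (2 * (2 - m)) - 1)) * ((1 - m) * (w - 1)\<^sup>2 * h * V)"
    using beta2_bound[of m d W0 W1] m d W h V by (intro mult_right_mono) auto
  also have "\<dots> = beta2 d m W0 W1 * (1/2 * (w - 1)\<^sup>2 * h * V)" by (simp add: beta2_def)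
  finally show ?thesis by (simp add: t_def)
qed

text \<open>The pointwise form of the theorem.  With b the gradient of the pressure h and a the
  gradient of w, the vectors below are (up to the factor h) the gradients appearing in the
  integrands of I and J.\<close>
lemma pointwise_bound:
  fixes a b :: "'v::real_normed_vector" and m w h V W0 W1 :: real and d :: nat
  assumes m: "0 < m" "m < 1" and W: "0 < W0" "W0 \<le> 1" "1 \<le> W1" and w: "W0 \<le> w" "w \<le> W1"
    and h: "0 \<le> h" and V: "0 \<le> V" and b: "(norm b)\<^sup>2 \<le> 2 * (1 - m) / m * h" and d: "3 \<le> d"
  shows "m * (norm ((w - 1) *\<^sub>R b + h *\<^sub>R a))\<^sup>2 * V
    \<le> beta1 m W0 W1 * (m / (m - 1)\<^sup>2
          * (norm ((w powr (m - 1) - 1) *\<^sub>R b + h *\<^sub>R (((m - 1) * w powr (m - 2)) *\<^sub>R a)))\<^sup>2 * w * V)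
      + beta2 d m W0 W1 * (1/2 * (w - 1)\<^sup>2 * h * V)"
proof (cases "W0 = W1")
  case True
  hence "w = 1" "W0 = 1" "W1 = 1" using W w by auto
  thus ?thesis using m by (simp add: beta1_def beta2_def power_mult_distrib)
next
  case False
  define t where "t = W1 / W0"
  have t: "1 < t" using W False by (simp add: t_def)
  have w0: "0 < w" using W w by linarith
  define P where "P = (w powr (m - 1) - 1) *\<^sub>R b + h *\<^sub>R (((m - 1) * w powr (m - 2)) *\<^sub>R a)"
  define c where "c = w powr (2 - m) / (m - 1)"
  define R where "R = (w - 1) - w * (w powr (1 - m) - 1) / (1 - m)"
  have "(w - 1) *\<^sub>R b + h *\<^sub>R a = c *\<^sub>R P + R *\<^sub>R b"
    unfolding P_def c_def R_def using m by (intro gradient_decomposition[OF w0]) simp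
  hence "(norm ((w - 1) *\<^sub>R b + h *\<^sub>R a))\<^sup>2 \<le> t * (norm (c *\<^sub>R P))\<^sup>2 + t / (t - 1) * (norm (R *\<^sub>R b))\<^sup>2"
    by (simp only: norm_sum_sq_le_weighted[OF t])
  hence "(norm ((w - 1) *\<^sub>R b + h *\<^sub>R a))\<^sup>2 \<le> t * c\<^sup>2 * (norm P)\<^sup>2 + t / (t - 1) * R\<^sup>2 * (norm b)\<^sup>2"
    by (simp add: power_mult_distrib mult_ac)
  hence "m * V * (norm ((w - 1) *\<^sub>R b + h *\<^sub>R a))\<^sup>2
      \<le> m * V * (t * c\<^sup>2 * (norm P)\<^sup>2 + t / (t - 1) * R\<^sup>2 * (norm b)\<^sup>2)"
    using m V by (intro mult_left_mono) auto
  hence "m * V * (norm ((w - 1) *\<^sub>R b + h *\<^sub>R a))\<^sup>2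
      \<le> m * V * (t * c\<^sup>2 * (norm P)\<^sup>2) + m * V * (t / (t - 1) * R\<^sup>2 * (norm b)\<^sup>2)"
    by (simp only: distrib_left)
  moreover have "m * V * (t * c\<^sup>2 * (norm P)\<^sup>2) \<le> beta1 m W0 W1 * (m / (m - 1)\<^sup>2 * (norm P)\<^sup>2 * w * V)"
    unfolding t_def c_def using m W w w0 V by (intro principal_term_bound) auto
  moreover have "\<bar>R\<bar> \<le> (w - 1)\<^sup>2"
    unfolding R_def using powr_taylor_remainder[OF w0, of "1 - m"] m by simp
  hence "m * V * (t / (t - 1) * R\<^sup>2 * (norm b)\<^sup>2) \<le> beta2 d m W0 W1 * (1/2 * (w - 1)\<^sup>2 * h * V)"
    unfolding t_def using m W False w b h V d by (intro remainder_term_bound) auto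
  ultimately have "m * V * (norm ((w - 1) *\<^sub>R b + h *\<^sub>R a))\<^sup>2
      \<le> beta1 m W0 W1 * (m / (m - 1)\<^sup>2 * (norm P)\<^sup>2 * w * V) + beta2 d m W0 W1 * (1/2 * (w - 1)\<^sup>2 * h * V)"
    by linarith
  thus ?thesis unfolding P_def by (simp only: mult_ac)
qed

lemma grad_has_derivative:
  fixes u :: "real^'n \<Rightarrow> real"
  assumes "(u has_derivative u') (at x)"
  shows "grad u x = (\<chi> i. u' (axis i 1))"
  using frechet_derivative_at[OF assms] by (simp add: grad_def)

lemma grad_mult:
  fixes u v :: "real^'n \<Rightarrow> real"
  assumes "u differentiable (at x)" "v differentiable (at x)"
  shows "grad (\<lambda>y. u y * v y) x = u x *\<^sub>R grad v x + v x *\<^sub>R grad u x"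
proof -
  define U V where "U = frechet_derivative u (at x)" and "V = frechet_derivative v (at x)"
  have "(u has_derivative U) (at x)" "(v has_derivative V) (at x)"
    using assms by (simp_all add: U_def V_def frechet_derivative_works)
  from grad_has_derivative[OF has_derivative_mult[OF this]] this
  show ?thesis by (simp add: grad_has_derivative vec_eq_iff algebra_simps)
qed

lemma grad_compose:
  fixes u :: "real^'n \<Rightarrow> real"
  assumes f: "(f has_real_derivative f') (at (u x))" and u: "u differentiable (at x)"
  shows "grad (\<lambda>y. f (u y)) x = f' *\<^sub>R grad u x"
proof -
  define U where "U = frechet_derivative u (at x)"
  have du: "(u has_derivative U) (at x)" using u by (simp add: U_def frechet_derivative_works)
  have "(f has_derivative (\<lambda>t. f' * t)) (at (u x))"
    using f by (simp add: has_field_derivative_def)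
  from grad_has_derivative[OF has_derivative_compose[OF du this]] grad_has_derivative[OF du]
  show ?thesis by (simp add: vec_eq_iff)
qed

lemma grad_mult_compose:
  fixes u v :: "real^'n \<Rightarrow> real"
  assumes f: "(f has_real_derivative f') (at (u x))"
    and u: "u differentiable (at x)" and v: "v differentiable (at x)"
  shows "grad (\<lambda>y. f (u y) * v y) x = f (u x) *\<^sub>R grad v x + (v x * f') *\<^sub>R grad u x"
proof -
  have "f differentiable (at (u x))"
    using f by (auto intro: differentiableI simp: has_field_derivative_def)
  hence "(\<lambda>y. f (u y)) differentiable (at x)" using u by (rule differentiable_compose)
  thus ?thesis using grad_mult[OF _ v] grad_compose[OF f u] by simp
qed

definition bar_pressure :: "real \<Rightarrow> real \<Rightarrow> real^'n \<Rightarrow> real" where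
  "bar_pressure m D x = D + (1 - m) / (2 * m) * (norm x)\<^sup>2"

lemma VD_bar_pressure: "VD m D x = bar_pressure m D x powr (-1 / (1 - m))"
  by (simp add: VD_def bar_pressure_def)

lemma bar_pressure_pos:
  assumes "0 < m" "m < 1" "0 < D" shows "0 < bar_pressure m D x"
  using assms by (simp add: bar_pressure_def add_pos_nonneg)

lemma VD_pos:
  assumes "0 < m" "m < 1" "0 < D" shows "0 < VD m D x"
  using bar_pressure_pos[OF assms, of x] by (simp add: VD_bar_pressure)

lemma VD_powr_m_minus_1:
  assumes m: "0 < m" "m < 1" and D: "0 < D"
  shows "VD m D x powr (m - 1) = bar_pressure m D x"
proof -
  have "-1 / (1 - m) * (m - 1) = 1" using m by (simp add: field_simps)
  thus ?thesis using bar_pressure_pos[OF m D, of x] by (simp add: VD_bar_pressure powr_powr)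
qed

lemma VD_powr_2_minus_m:
  assumes m: "0 < m" "m < 1" and D: "0 < D"
  shows "VD m D x powr (2 - m) = VD m D x / bar_pressure m D x"
proof -
  define P where "P = bar_pressure m D x"
  have P: "0 < P" using bar_pressure_pos[OF m D] by (simp add: P_def)
  have "-1 / (1 - m) * (2 - m) = -1 / (1 - m) + (-1)" using m by (simp add: field_simps)
  have "VD m D x powr (2 - m) = P powr (-1 / (1 - m) * (2 - m))"
    by (simp add: VD_bar_pressure P_def powr_powr)
  also have "\<dots> = P powr (-1 / (1 - m)) * P powr (-1)"
    by (simp only: \<open>-1 / (1 - m) * (2 - m) = -1 / (1 - m) + (-1)\<close> powr_add)
  also have "\<dots> = VD m D x / P" using P by (simp add: VD_bar_pressure P_def powr_minus_divide)
  finally show ?thesis by (simp add: P_def)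
qed

lemma bar_pressure_has_derivative:
  "(bar_pressure m D has_derivative (\<lambda>v. (1 - m) / m * (x \<bullet> v))) (at x)"
proof -
  define c where "c = (1 - m) / (2 * m)"
  have eq: "bar_pressure m D = (\<lambda>y. D + c * (y \<bullet> y))"
    by (simp add: bar_pressure_def c_def fun_eq_iff power2_norm_eq_inner)
  have c2: "2 * c = (1 - m) / m" by (cases "m = 0") (simp_all add: c_def field_simps)
  have "((\<lambda>y. D + c * (y \<bullet> y)) has_derivative (\<lambda>v. 2 * c * (x \<bullet> v))) (at x)"
    by (auto intro!: derivative_eq_intros simp: inner_commute algebra_simps)
  thus ?thesis unfolding eq c2 .
qed

lemma grad_bar_pressure: "grad (bar_pressure m D) x = ((1 - m) / m) *\<^sub>R x"
  using grad_has_derivative[OF bar_pressure_has_derivative] by (simp add: vec_eq_iff inner_axis)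

text \<open>The pressure gradient is controlled by the pressure itself; this is where the
  weight of the linearized functional F enters the estimate.\<close>
lemma norm_grad_bar_pressure:
  assumes "0 < m" "m < 1" "0 \<le> D"
  shows "(norm (grad (bar_pressure m D) x))\<^sup>2 \<le> 2 * (1 - m) / m * bar_pressure m D x"
proof -
  have "(norm (grad (bar_pressure m D) x))\<^sup>2 = 2 * (1 - m) / m * ((1 - m) / (2 * m) * (norm x)\<^sup>2)"
    using assms by (simp add: grad_bar_pressure power_mult_distrib field_simps power2_eq_square)
  also have "\<dots> \<le> 2 * (1 - m) / m * bar_pressure m D x"
    using assms by (intro mult_left_mono) (auto simp: bar_pressure_def)
  finally show ?thesis .
qed

lemma continuous_on_bar_pressure: "continuous_on UNIV (bar_pressure m D)"
  unfolding bar_pressure_def by (intro continuous_intros)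

lemma continuous_on_VD:
  assumes "0 < m" "m < 1" "0 < D" shows "continuous_on UNIV (VD m D)"
proof -
  have "\<forall>x\<in>UNIV. bar_pressure m D x \<noteq> 0" using bar_pressure_pos[OF assms] by (metis order_less_irrefl)
  thus ?thesis unfolding VD_bar_pressure[abs_def]
    by (intro continuous_intros continuous_on_bar_pressure)
qed

lemma C1_continuous_on: "C1 w \<Longrightarrow> continuous_on UNIV w"
  unfolding C1_def by (intro continuous_at_imp_continuous_on) (auto intro: differentiable_imp_continuous_within)

lemma Ifun_profile_form:
  fixes w :: "real^'n \<Rightarrow> real"
  assumes m: "0 < m" "m < 1" and Ds: "0 < Ds" and w: "C1 w"
  shows "Ifun m Ds (\<lambda>x. (w x - 1) * VD m Ds x powr (m - 1))
    = (\<integral>\<^sup>+ x. ennreal (m * (norm ((w x - 1) *\<^sub>R grad (bar_pressure m Ds) x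
          + bar_pressure m Ds x *\<^sub>R grad w x))\<^sup>2 * VD m Ds x) \<partial>lborel)"
proof -
  have "grad (\<lambda>y. (w y - 1) * bar_pressure m Ds y) x
      = (w x - 1) *\<^sub>R grad (bar_pressure m Ds) x + bar_pressure m Ds x *\<^sub>R grad w x" for x
  proof -
    have f: "((\<lambda>t. t - 1) has_real_derivative 1) (at (w x))" by (auto intro!: derivative_eq_intros)
    have "w differentiable (at x)" using w by (simp add: C1_def)
    from grad_mult_compose[OF f this differentiableI[OF bar_pressure_has_derivative]]
    show ?thesis by simp
  qed
  thus ?thesis by (simp add: Ifun_def VD_powr_m_minus_1[OF m Ds])
qed

text \<open>The functional J[w] written through the pressure; w > 0 is needed for the chain rule of w^(m-1).\<close>
lemma Jfun_profile_form:
  fixes w :: "real^'n \<Rightarrow> real"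
  assumes m: "0 < m" "m < 1" and Ds: "0 < Ds" and w: "C1 w" "\<And>x. 0 < w x"
  shows "Jfun m Ds w
    = (\<integral>\<^sup>+ x. ennreal (m / (m - 1)\<^sup>2 * (norm ((w x powr (m - 1) - 1) *\<^sub>R grad (bar_pressure m Ds) x
          + bar_pressure m Ds x *\<^sub>R (((m - 1) * w x powr (m - 2)) *\<^sub>R grad w x)))\<^sup>2
          * w x * VD m Ds x) \<partial>lborel)"
proof -
  have "grad (\<lambda>y. (w y powr (m - 1) - 1) * bar_pressure m Ds y) x
      = (w x powr (m - 1) - 1) *\<^sub>R grad (bar_pressure m Ds) x
        + bar_pressure m Ds x *\<^sub>R (((m - 1) * w x powr (m - 2)) *\<^sub>R grad w x)" for x
  proof -
    have f: "((\<lambda>t. t powr (m - 1) - 1) has_real_derivative (m - 1) * w x powr (m - 2)) (at (w x))"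
      using has_real_derivative_powr[OF w(2)[of x], of "m - 1"] w(2)[of x]
      by (auto intro!: derivative_eq_intros simp: algebra_simps)
    have "w differentiable (at x)" using w by (simp add: C1_def)
    from grad_mult_compose[OF f this differentiableI[OF bar_pressure_has_derivative]]
    show ?thesis by simp
  qed
  thus ?thesis by (simp add: Jfun_def VD_powr_m_minus_1[OF m Ds])
qed

lemma Ffun_profile_form:
  fixes w :: "real^'n \<Rightarrow> real"
  assumes m: "0 < m" "m < 1" and Ds: "0 < Ds"
  shows "Ffun m Ds (\<lambda>x. (w x - 1) * VD m Ds x powr (m - 1))
    = (\<integral>\<^sup>+ x. ennreal (1/2 * (w x - 1)\<^sup>2 * bar_pressure m Ds x * VD m Ds x) \<partial>lborel)"
proof -
  have "1/2 * ((w x - 1) * bar_pressure m Ds x)\<^sup>2 * (VD m Ds x / bar_pressure m Ds x)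
      = 1/2 * (w x - 1)\<^sup>2 * bar_pressure m Ds x * VD m Ds x" for x
    using bar_pressure_pos[OF m Ds, of x] by (simp add: power2_eq_square field_simps)
  thus ?thesis unfolding Ffun_def VD_powr_m_minus_1[OF m Ds] VD_powr_2_minus_m[OF m Ds] by (simp only:)
qed

lemma nn_integral_le_lincomb:
  fixes f g k :: "'a \<Rightarrow> real" and a b :: real
  assumes le: "\<And>x. f x \<le> a * g x + b * k x"
    and meas: "g \<in> borel_measurable M" "k \<in> borel_measurable M"
    and nonneg: "0 \<le> a" "0 \<le> b" "\<And>x. 0 \<le> g x" "\<And>x. 0 \<le> k x"
  shows "(\<integral>\<^sup>+ x. ennreal (f x) \<partial>M)
    \<le> ennreal a * (\<integral>\<^sup>+ x. ennreal (g x) \<partial>M) + ennreal b * (\<integral>\<^sup>+ x. ennreal (k x) \<partial>M)"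
proof -
  have "(\<integral>\<^sup>+ x. ennreal (f x) \<partial>M) \<le> (\<integral>\<^sup>+ x. ennreal a * ennreal (g x) + ennreal b * ennreal (k x) \<partial>M)"
    using le nonneg by (intro nn_integral_mono) (simp add: ennreal_leI flip: ennreal_mult ennreal_plus)
  also have "\<dots> = ennreal a * (\<integral>\<^sup>+ x. ennreal (g x) \<partial>M) + ennreal b * (\<integral>\<^sup>+ x. ennreal (k x) \<partial>M)"
    using meas by (simp add: nn_integral_add nn_integral_cmult)
  finally show ?thesis .
qed

lemma beta_limit:
  "\<forall>\<epsilon>>0. \<exists>\<delta>>0. \<forall>V0 V1. 0 < V0 \<and> V0 \<le> 1 \<and> 1 \<le> V1 \<and> max (1 - V0) (V1 - 1) < \<delta> \<longrightarrow>
      \<bar>1 - beta1 m V0 V1\<bar> + beta2 d m V0 V1 < \<epsilon>"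
proof (intro allI impI)
  fix \<epsilon> :: real assume e: "\<epsilon> > 0"
  define F where "F p = \<bar>1 - beta1 m (fst p) (snd p)\<bar> + beta2 d m (fst p) (snd p)" for p :: "real \<times> real"
  have "continuous (at (1, 1)) F"
    unfolding F_def beta1_def beta2_def by (auto intro!: continuous_intros)
  moreover have "F (1, 1) = 0" by (simp add: F_def beta1_def beta2_def)
  ultimately obtain \<delta> where \<delta>: "\<delta> > 0" "\<And>p. dist p (1, 1) < \<delta> \<Longrightarrow> dist (F p) 0 < \<epsilon>"
    using e unfolding continuous_at_eps_delta by metis
  show "\<exists>\<delta>>0. \<forall>V0 V1. 0 < V0 \<and> V0 \<le> 1 \<and> 1 \<le> V1 \<and> max (1 - V0) (V1 - 1) < \<delta> \<longrightarrow>
      \<bar>1 - beta1 m V0 V1\<bar> + beta2 d m V0 V1 < \<epsilon>"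
  proof (intro exI[of _ "\<delta> / 2"] conjI allI impI)
    fix V0 V1 :: real assume V: "0 < V0 \<and> V0 \<le> 1 \<and> 1 \<le> V1 \<and> max (1 - V0) (V1 - 1) < \<delta> / 2"
    have "dist (V0, V1) (1, 1) \<le> dist V0 1 + dist V1 1"
      using sqrt_add_le_add_sqrt[of "(dist V0 1)\<^sup>2" "(dist V1 1)\<^sup>2"] by (simp add: dist_Pair_Pair)
    also have "\<dots> < \<delta>" using V by (simp add: dist_real_def max_def split: if_splits)
    finally have "dist (F (V0, V1)) 0 < \<epsilon>" by (rule \<delta>(2))
    thus "\<bar>1 - beta1 m V0 V1\<bar> + beta2 d m V0 V1 < \<epsilon>" by (simp add: F_def dist_real_def)
  qed (use \<delta> in simp)
qed

lemma profile_integrands_measurable: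
  fixes w :: "real^'n \<Rightarrow> real"
  assumes m: "0 < m" "m < 1" and Ds: "0 < Ds" and w: "C1 w" "\<And>x. 0 < w x"
  shows "(\<lambda>x. m / (m - 1)\<^sup>2 * (norm ((w x powr (m - 1) - 1) *\<^sub>R grad (bar_pressure m Ds) x
          + bar_pressure m Ds x *\<^sub>R (((m - 1) * w x powr (m - 2)) *\<^sub>R grad w x)))\<^sup>2
          * w x * VD m Ds x) \<in> borel_measurable lborel"
    and "(\<lambda>x. 1/2 * (w x - 1)\<^sup>2 * bar_pressure m Ds x * VD m Ds x) \<in> borel_measurable lborel"
proof -
  have cont: "continuous_on UNIV w" "continuous_on UNIV (grad w)"
      "continuous_on UNIV (bar_pressure m Ds)" "continuous_on UNIV (VD m Ds)"
      "continuous_on UNIV (grad (bar_pressure m Ds))"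
    using w C1_continuous_on continuous_on_bar_pressure continuous_on_VD[OF m Ds]
    by (auto simp: C1_def grad_bar_pressure intro!: continuous_intros)
  have "\<forall>x\<in>UNIV. w x \<noteq> 0" using w(2) by (metis order_less_irrefl)
  with cont m show "(\<lambda>x. m / (m - 1)\<^sup>2 * (norm ((w x powr (m - 1) - 1) *\<^sub>R grad (bar_pressure m Ds) x
          + bar_pressure m Ds x *\<^sub>R (((m - 1) * w x powr (m - 2)) *\<^sub>R grad w x)))\<^sup>2
          * w x * VD m Ds x) \<in> borel_measurable lborel"
    by (auto intro!: borel_measurable_continuous_onI continuous_intros)
  from cont show "(\<lambda>x. 1/2 * (w x - 1)\<^sup>2 * bar_pressure m Ds x * VD m Ds x) \<in> borel_measurable lborel"
    by (auto intro!: borel_measurable_continuous_onI continuous_intros)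
qed

text \<open>The inequality holds in the extended nonnegative reals.\<close>
theorem mainTheorem13:
  fixes w :: "real^'n \<Rightarrow> real"
    and m D0 D1 Ds W0 W1 :: real
  assumes d3: "CARD('n) \<ge> 3"
    and m: "0 < m" "m < 1"
    and D: "0 < D1" "D1 \<le> Ds" "Ds \<le> D0"
    and wC1: "C1 w"
    and wV: "\<forall>x. VD m D0 x \<le> w x * VD m Ds x \<and> w x * VD m Ds x \<le> VD m D1 x"
    and wL1: "\<exists>f. integrable lborel f \<and> (\<forall>x. w x - 1 = f x / VD m Ds x)"
    and W: "0 < W0" "W0 \<le> 1" "1 \<le> W1"
    and wW: "\<forall>x. W0 \<le> w x \<and> w x \<le> W1"
  shows "Ifun m Ds (\<lambda>x. (w x - 1) * VD m Ds x powr (m - 1))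
           \<le> ennreal (beta1 m W0 W1) * Jfun m Ds w
             + ennreal (beta2 CARD('n) m W0 W1) * Ffun m Ds (\<lambda>x. (w x - 1) * VD m Ds x powr (m - 1))
       \<and> (\<forall>\<epsilon>>0. \<exists>\<delta>>0. \<forall>V0 V1. 0 < V0 \<and> V0 \<le> 1 \<and> 1 \<le> V1 \<and> max (1 - V0) (V1 - 1) < \<delta> \<longrightarrow>
             \<bar>1 - beta1 m V0 V1\<bar> + beta2 CARD('n) m V0 V1 < \<epsilon>)"
proof -
  have Ds: "0 < Ds" using D by linarith
  have wpos: "\<And>x. 0 < w x" using wW W by (metis less_le_trans)
  have b1: "0 \<le> beta1 m W0 W1" using W by (simp add: beta1_def)
  have b2: "0 \<le> beta2 CARD('n) m W0 W1" using beta2_nonneg[OF m(2) d3 W] .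
  have "Ifun m Ds (\<lambda>x. (w x - 1) * VD m Ds x powr (m - 1))
      \<le> ennreal (beta1 m W0 W1) * Jfun m Ds w
        + ennreal (beta2 CARD('n) m W0 W1) * Ffun m Ds (\<lambda>x. (w x - 1) * VD m Ds x powr (m - 1))"
    unfolding Ifun_profile_form[OF m Ds wC1] Jfun_profile_form[OF m Ds wC1 wpos] Ffun_profile_form[OF m Ds]
    using wW norm_grad_bar_pressure[OF m less_imp_le[OF Ds]] bar_pressure_pos[OF m Ds, THEN less_imp_le]
      VD_pos[OF m Ds, THEN less_imp_le] wpos[THEN less_imp_le] d3 m
    by (intro nn_integral_le_lincomb[OF _ profile_integrands_measurable[OF m Ds wC1 wpos] b1 b2]
        pointwise_bound[OF m W])
      (auto intro!: mult_nonneg_nonneg divide_nonneg_nonneg)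
  with beta_limit show ?thesis by blast
qed

end
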